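(* Let $\mathbf{n}=(n_0,\dots,n_L)$ and $\mathbf{A}=(A_1,\dots,A_L)\in\mathsf{Param}(\mathbf{n})$ (merged notation), and let $\mathbf{Q}=(Q_1,\dots,Q_{L-1})$ be the tuple of orthogonal matrices produced by the QR compression algorithm applied to $\mathbf{A}$. Then $\mathbf{Q}^{-1}\cdot\mathbf{A}$ belongs to $\mathsf{Param}^{\rm int}(\mathbf{n})$.
   Context: Merged notation: $\mathsf{Param}(\mathbf{n})=\prod_{i=1}^L\mathbb{R}^{n_i\times(n_{i-1}+1)}$, where $A_i=[\,b_i\ W_i\,]$ combines bias $b_i\in\mathbb{R}^{n_i}$ and weights $W_i\in\mathbb{R}^{n_i\times n_{i-1}}$. Reduced widths: $n^{\rm red}_0=n_0$, $n^{\rm red}_i=\min(n_i,n^{\rm red}_{i-1}+1)$ for $1\le i\le L-1$, $n^{\rm red}_L=n_L$. The group $O(n_1)\times\dots\times O(n_{L-1})$ acts by $\mathbf{Q}\cdot\mathbf{A}=\big(Q_iA_i\begin{bmatrix}1&0\\0&Q_{i-1}^{-1}\end{bmatrix}\big)_{i=1}^L$, with $Q_0=\mathrm{id}_{n_0}$, $Q_L=\mathrm{id}_{n_L}$. $\mathsf{Param}^{\rm int}(\mathbf{n})$ is the subspace of $\mathbf{T}=(T_i)\in\mathsf{Param}(\mathbf{n})$ such that for each $i$ the bottom-left $(n_i-n^{\rm red}_i)\times(1+n^{\rm red}_{i-1})$ block of $T_i$ is zero. QR compression algorithm: $M_1=A_1$; for $i=1,\dots,L-1$: compute a complete QR decomposition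 $M_i=Q_i\,\mathrm{inc}_i\,R_i$ with $Q_i\in O(n_i)$, $R_i$ upper triangular of size $n^{\rm red}_i\times(1+n^{\rm red}_{i-1})$ and $\mathrm{inc}_i:\mathbb{R}^{n^{\rm red}_i}\hookrightarrow\mathbb{R}^{n_i}$ the inclusion into the first coordinates; record $Q_i$ and $R_i$; set $M_{i+1}=A_{i+1}\begin{bmatrix}1&0\\0&Q_i\,\mathrm{inc}_i\end{bmatrix}$. The output is $\mathbf{Q}=(Q_i)$ and $\mathbf{V}=(R_1,\dots,R_{L-1},M_L)$. *)

theory Defs
  imports "Jordan_Normal_Form.Matrix"
begin

text \<open>Widths are a list n = [n_0, ..., n_L]; L = length n - 1.
  Layer matrices and orthogonal matrices are indexed by nat (A i for 1 <= i <= L,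
  Q i for 1 <= i <= L-1).\<close>

definition depth :: "nat list \<Rightarrow> nat" where
  "depth ns = length ns - 1"

fun nred_aux :: "nat list \<Rightarrow> nat \<Rightarrow> nat" where
  "nred_aux ns 0 = ns ! 0"
| "nred_aux ns (Suc i) = min (ns ! Suc i) (nred_aux ns i + 1)"

definition nred :: "nat list \<Rightarrow> nat \<Rightarrow> nat" where
  "nred ns i = (if i = depth ns then ns ! i else nred_aux ns i)"

definition Param :: "nat list \<Rightarrow> (nat \<Rightarrow> real mat) set" where
  "Param ns = {A. \<forall>i\<in>{1..depth ns}. A i \<in> carrier_mat (ns ! i) (ns ! (i - 1) + 1)}"

definition orth_group :: "nat \<Rightarrow> real mat set" where
  "orth_group k = {Q. Q \<in> carrier_mat k k \<and> transpose_mat Q * Q = 1\<^sub>m k}"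

definition one_plus :: "real mat \<Rightarrow> real mat" where
  "one_plus B = mat (dim_row B + 1) (dim_col B + 1)
     (\<lambda>(r, c). if r = 0 \<and> c = 0 then 1 else if r = 0 \<or> c = 0 then 0 else B $$ (r - 1, c - 1))"

definition inc :: "nat \<Rightarrow> nat \<Rightarrow> real mat" where
  "inc k m = mat k m (\<lambda>(r, c). if r = c then 1 else 0)"

definition Qext :: "nat list \<Rightarrow> (nat \<Rightarrow> real mat) \<Rightarrow> nat \<Rightarrow> real mat" where
  "Qext ns Q i = (if i = 0 \<or> i = depth ns then 1\<^sub>m (ns ! i) else Q i)"

definition orth_inv :: "real mat \<Rightarrow> real mat" where
  "orth_inv Q = transpose_mat Q"

definition act :: "nat list \<Rightarrow> (nat \<Rightarrow> real mat) \<Rightarrow> (nat \<Rightarrow> real mat) \<Rightarrow> (nat \<Rightarrow> real mat)" where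
  "act ns Q A = (\<lambda>i. Qext ns Q i * A i * one_plus (orth_inv (Qext ns Q (i - 1))))"

definition grp_inv :: "(nat \<Rightarrow> real mat) \<Rightarrow> (nat \<Rightarrow> real mat)" where
  "grp_inv Q = (\<lambda>i. orth_inv (Q i))"

definition Param_int :: "nat list \<Rightarrow> (nat \<Rightarrow> real mat) set" where
  "Param_int ns = {T. T \<in> Param ns \<and>
     (\<forall>i\<in>{1..depth ns}. \<forall>r c. nred ns i \<le> r \<and> r < ns ! i \<and> c < 1 + nred ns (i - 1)
         \<longrightarrow> T i $$ (r, c) = 0)}"

fun qrM :: "nat list \<Rightarrow> (nat \<Rightarrow> real mat) \<Rightarrow> (nat \<Rightarrow> real mat) \<Rightarrow> nat \<Rightarrow> real mat" where
  "qrM ns A Q 0 = A 0"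
| "qrM ns A Q (Suc 0) = A 1"
| "qrM ns A Q (Suc (Suc k)) =
     A (k + 2) * one_plus (Q (k + 1) * inc (ns ! (k + 1)) (nred ns (k + 1)))"

text \<open>(Q, R) is a possible run of the QR compression algorithm on A (any choice of
  complete QR decompositions at each step).\<close>
definition qr_run :: "nat list \<Rightarrow> (nat \<Rightarrow> real mat) \<Rightarrow> (nat \<Rightarrow> real mat) \<Rightarrow> (nat \<Rightarrow> real mat) \<Rightarrow> bool" where
  "qr_run ns A Q R \<longleftrightarrow>
     (\<forall>i\<in>{1..<depth ns}.
        Q i \<in> orth_group (ns ! i) \<and>
        R i \<in> carrier_mat (nred ns i) (1 + nred ns (i - 1)) \<and>
        upper_triangular (R i) \<and>
        qrM ns A Q i = Q i * inc (ns ! i) (nred ns i) * R i)"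

end

theory Submission
  imports Defs
begin

(* For 1 <= i < L, the layer Q_i^T A_i (1 (+) Q_{i-1}) of Q^-1 . A agrees on its first
   1 + n^red_{i-1} columns with Q_i^T A_i (1 (+) Q_{i-1} inc) = Q_i^T M_i = inc R_i, because
   right multiplication by 1 (+) Q_{i-1} inc only uses those columns of 1 (+) Q_{i-1}.
   The rows of inc R_i from n^red_i on are zero. For i = L the block has no rows,
   since n^red_L = n_L. *)

lemma dim_one_plus [simp]:
  "dim_row (one_plus B) = dim_row B + 1" "dim_col (one_plus B) = dim_col B + 1"
  unfolding one_plus_def by simp_all

lemma one_plus_carrier_mat: "B \<in> carrier_mat n m \<Longrightarrow> one_plus B \<in> carrier_mat (n + 1) (m + 1)"
  by (rule carrier_matI) auto

lemma one_plus_one_mat [simp]: "one_plus (1\<^sub>m n) = 1\<^sub>m (n + 1)"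
  unfolding one_plus_def by (rule eq_matI) auto

lemma dim_inc [simp]: "dim_row (inc n m) = n" "dim_col (inc n m) = m"
  unfolding inc_def by simp_all

lemma inc_carrier_mat: "inc n m \<in> carrier_mat n m"
  by (rule carrier_matI) simp_all

lemma inc_self: "inc n n = 1\<^sub>m n"
  unfolding inc_def by (rule eq_matI) auto

lemma mult_inc_index:
  assumes "P \<in> carrier_mat a n" "m \<le> n" "x < a" "y < m"
  shows "(P * inc n m) $$ (x, y) = P $$ (x, y)"
proof -
  have "(P * inc n m) $$ (x, y) = (\<Sum>j<n. P $$ (x, j) * (if j = y then 1 else 0))"
    using assms by (simp add: inc_def scalar_prod_def lessThan_atLeast0)
  also have "\<dots> = P $$ (x, y)"
    using assms by (simp add: if_distrib cong: if_cong)
  finally show ?thesis .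
qed

lemma inc_mult_index_zero:
  assumes "R \<in> carrier_mat m k" "m \<le> r" "r < n" "c < k"
  shows "(inc n m * R) $$ (r, c) = 0"
  using assms by (simp add: inc_def scalar_prod_def)

lemma index_one_plus:
  assumes "r < dim_row B + 1" "c < dim_col B + 1"
  shows "one_plus B $$ (r, c) =
    (if r = 0 \<and> c = 0 then 1 else if r = 0 \<or> c = 0 then 0 else B $$ (r - 1, c - 1))"
  using assms by (simp add: one_plus_def)

lemma col_one_plus_mult_inc:
  assumes P: "P \<in> carrier_mat n n" and "m \<le> n" "c < m + 1"
  shows "col (one_plus (P * inc n m)) c = col (one_plus P) c"
proof (rule eq_vecI)
  fix x assume "x < dim_vec (col (one_plus P) c)"
  then have x: "x < n + 1" using P by simp
  have "one_plus (P * inc n m) $$ (x, c) = one_plus P $$ (x, c)"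
  proof (cases "x = 0 \<or> c = 0")
    case True
    then show ?thesis using x assms by (auto simp: index_one_plus)
  next
    case False
    have "one_plus (P * inc n m) $$ (x, c) = (P * inc n m) $$ (x - 1, c - 1)"
      using False x assms by (simp add: index_one_plus del: index_mult_mat(1))
    also have "\<dots> = P $$ (x - 1, c - 1)"
      using False x assms by (intro mult_inc_index) auto
    also have "\<dots> = one_plus P $$ (x, c)"
      using False x assms by (simp add: index_one_plus)
    finally show ?thesis .
  qed
  then show "col (one_plus (P * inc n m)) c $ x = col (one_plus P) c $ x"
    using x assms by (simp add: index_col del: index_mult_mat(1))
qed (use P in simp)

lemma mult_one_plus_mult_inc_index:
  assumes "X \<in> carrier_mat a (n + 1)" "P \<in> carrier_mat n n" "m \<le> n" "r < a" "c < m + 1"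
  shows "(X * one_plus (P * inc n m)) $$ (r, c) = (X * one_plus P) $$ (r, c)"
proof -
  have dims: "r < dim_row X" "c < dim_col (one_plus (P * inc n m))" "c < dim_col (one_plus P)"
    using assms by auto
  show ?thesis
    unfolding index_mult_mat(1)[OF dims(1,2)] index_mult_mat(1)[OF dims(1,3)]
      col_one_plus_mult_inc[OF assms(2,3,5)] ..
qed

lemma orth_group_cancel_left:
  assumes "Q \<in> orth_group n" "B \<in> carrier_mat n k"
  shows "transpose_mat Q * (Q * B) = B"
proof -
  have Q: "Q \<in> carrier_mat n n" "transpose_mat Q * Q = 1\<^sub>m n"
    using assms(1) by (auto simp: orth_group_def)
  then have "transpose_mat Q * (Q * B) = (transpose_mat Q * Q) * B"
    using Q(1) assms(2) by (metis assoc_mult_mat transpose_carrier_mat)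
  then show ?thesis using Q(2) assms(2) by simp
qed

lemma nred_le:
  assumes "i < depth ns"
  shows "nred ns i \<le> ns ! i"
  using assms by (cases i) (auto simp: nred_def)

lemma nred_zero:
  assumes "depth ns \<noteq> 0"
  shows "nred ns 0 = ns ! 0"
  using assms by (simp add: nred_def)

lemma nred_depth: "nred ns (depth ns) = ns ! depth ns"
  by (simp add: nred_def)

lemma Qext_carrier_mat:
  assumes "\<forall>j\<in>{1..<depth ns}. Q j \<in> carrier_mat (ns ! j) (ns ! j)" "i \<le> depth ns"
  shows "Qext ns Q i \<in> carrier_mat (ns ! i) (ns ! i)"
  using assms by (auto simp: Qext_def)

lemma qr_run_carrier_mat:
  assumes "qr_run ns A Q R"
  shows "\<forall>j\<in>{1..<depth ns}. Q j \<in> carrier_mat (ns ! j) (ns ! j)"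
  using assms by (simp add: qr_run_def orth_group_def)

lemma orth_inv_Qext_grp_inv: "orth_inv (Qext ns (grp_inv Q) j) = Qext ns Q j"
  by (simp add: Qext_def grp_inv_def orth_inv_def)

lemma act_grp_inv:
  "act ns (grp_inv Q) A i = Qext ns (grp_inv Q) i * A i * one_plus (Qext ns Q (i - 1))"
  by (simp add: act_def orth_inv_Qext_grp_inv)

lemma act_grp_inv_Param:
  assumes "A \<in> Param ns" "\<forall>j\<in>{1..<depth ns}. Q j \<in> carrier_mat (ns ! j) (ns ! j)"
  shows "act ns (grp_inv Q) A \<in> Param ns"
  unfolding Param_def mem_Collect_eq
proof (intro ballI)
  fix i assume i: "i \<in> {1..depth ns}"
  have "Qext ns (grp_inv Q) i \<in> carrier_mat (ns ! i) (ns ! i)"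
    using assms(2) i by (intro Qext_carrier_mat) (auto simp: grp_inv_def orth_inv_def)
  moreover have "A i \<in> carrier_mat (ns ! i) (ns ! (i - 1) + 1)"
    using assms(1) i by (simp add: Param_def)
  moreover have "Qext ns Q (i - 1) \<in> carrier_mat (ns ! (i - 1)) (ns ! (i - 1))"
    using assms(2) i by (intro Qext_carrier_mat) auto
  then have "one_plus (Qext ns Q (i - 1)) \<in> carrier_mat (ns ! (i - 1) + 1) (ns ! (i - 1) + 1)"
    by (rule one_plus_carrier_mat)
  ultimately show "act ns (grp_inv Q) A i \<in> carrier_mat (ns ! i) (ns ! (i - 1) + 1)"
    unfolding act_grp_inv by (intro mult_carrier_mat)
qed

(* Since Q_0 = id and n^red_0 = n_0, the recursion for M_i also covers M_1 = A_1. *)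
lemma qrM_eq_mult_one_plus:
  assumes "1 \<le> i" "i \<le> depth ns" "A i \<in> carrier_mat (ns ! i) (ns ! (i - 1) + 1)"
  shows "qrM ns A Q i = A i * one_plus (Qext ns Q (i - 1) * inc (ns ! (i - 1)) (nred ns (i - 1)))"
proof (cases "i = 1")
  case True
  then show ?thesis using assms by (simp add: Qext_def nred_zero inc_self)
next
  case False
  with assms(1) have "\<exists>k. i = Suc (Suc k)"
    by presburger
  then obtain k where "i = Suc (Suc k)" ..
  then show ?thesis using assms(2) by (simp add: Qext_def numeral_2_eq_2)
qed

lemma act_grp_inv_block_zero:
  assumes "A \<in> Param ns" "qr_run ns A Q R" "1 \<le> i" "i < depth ns"
    and r: "nred ns i \<le> r" "r < ns ! i" and c: "c < 1 + nred ns (i - 1)"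
  shows "act ns (grp_inv Q) A i $$ (r, c) = 0"
proof -
  let ?P = "Qext ns Q (i - 1)" and ?inc = "inc (ns ! (i - 1)) (nred ns (i - 1))"
  have Qi: "Q i \<in> orth_group (ns ! i)"
    and Ri: "R i \<in> carrier_mat (nred ns i) (1 + nred ns (i - 1))"
    and Mi: "qrM ns A Q i = Q i * inc (ns ! i) (nred ns i) * R i"
    using assms(2-4) by (auto simp: qr_run_def)
  have Qc: "Q i \<in> carrier_mat (ns ! i) (ns ! i)"
    using Qi by (simp add: orth_group_def)
  have Ai: "A i \<in> carrier_mat (ns ! i) (ns ! (i - 1) + 1)"
    using assms(1,3,4) by (simp add: Param_def)
  have P: "?P \<in> carrier_mat (ns ! (i - 1)) (ns ! (i - 1))"
    using qr_run_carrier_mat[OF assms(2)] assms(4) by (intro Qext_carrier_mat) auto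
  have QtA: "transpose_mat (Q i) * A i \<in> carrier_mat (ns ! i) (ns ! (i - 1) + 1)"
    using Qc Ai by (intro mult_carrier_mat) simp_all
  have Qt_M: "transpose_mat (Q i) * qrM ns A Q i = inc (ns ! i) (nred ns i) * R i"
    unfolding Mi assoc_mult_mat[OF Qc inc_carrier_mat Ri]
    using Qi mult_carrier_mat[OF inc_carrier_mat Ri] by (rule orth_group_cancel_left)
  have M_eq: "qrM ns A Q i = A i * one_plus (?P * ?inc)"
    using assms(3,4) Ai by (intro qrM_eq_mult_one_plus) auto
  have Qt_A: "transpose_mat (Q i) * A i * one_plus (?P * ?inc) = transpose_mat (Q i) * qrM ns A Q i"
    unfolding M_eq using Qc
    by (intro assoc_mult_mat[OF _ Ai one_plus_carrier_mat[OF mult_carrier_mat[OF P inc_carrier_mat]]])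
      simp
  have "Qext ns (grp_inv Q) i = transpose_mat (Q i)"
    using assms(3,4) by (simp add: Qext_def grp_inv_def orth_inv_def)
  then have "act ns (grp_inv Q) A i $$ (r, c) = (transpose_mat (Q i) * A i * one_plus ?P) $$ (r, c)"
    by (simp only: act_grp_inv)
  also have "\<dots> = (transpose_mat (Q i) * A i * one_plus (?P * ?inc)) $$ (r, c)"
    using mult_one_plus_mult_inc_index[OF QtA P] nred_le[of "i - 1" ns] assms(4) r c by simp
  also have "\<dots> = (inc (ns ! i) (nred ns i) * R i) $$ (r, c)"
    unfolding Qt_A Qt_M ..
  also have "\<dots> = 0"
    using inc_mult_index_zero[OF Ri r c] .
  finally show ?thesis .
qed

theorem proposition3:
  fixes ns :: "nat list" and A Q R :: "nat \<Rightarrow> real mat"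
  assumes "length ns \<ge> 2"
    and "A \<in> Param ns"
    and "qr_run ns A Q R"
  shows "act ns (grp_inv Q) A \<in> Param_int ns"
proof -
  have "act ns (grp_inv Q) A i $$ (r, c) = 0"
    if "i \<in> {1..depth ns}" "nred ns i \<le> r" "r < ns ! i" "c < 1 + nred ns (i - 1)" for i r c
  proof (cases "i = depth ns")
    case True
    then show ?thesis using that(2,3) nred_depth[of ns] by simp
  next
    case False
    then show ?thesis using that assms(2,3) by (intro act_grp_inv_block_zero) auto
  qed
  then show ?thesis
    using act_grp_inv_Param[OF assms(2) qr_run_carrier_mat[OF assms(3)]]
    by (simp add: Param_int_def)
qed

end
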